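(* Let $\rho>-1$ and let a BIMS channel have capacity $C\in[0,1]$ and function $F(\rho)$. Then: (i) $F^{\rm bec}(\rho;C)\le F(\rho)\le F^{\rm bsc}(\rho;C)$. (ii) If $-1<\rho<0$, then $C^{\rm bsc}\bigl(F(\rho)\bigr)\le C\le C^{\rm bec}\bigl(F(\rho)\bigr)$. (iii) If $\rho>0$, then $C^{\rm bec}\bigl(F(\rho)\bigr)\le C\le C^{\rm bsc}\bigl(F(\rho)\bigr)$. The extremes in (i)–(iii) are attained by the BEC and the BSC, respectively. Moreover, for every pair $(C,t)$ with $C\in[0,1]$ and $F^{\rm bec}(\rho;C)\le t\le F^{\rm bsc}(\rho;C)$ there exists a BIMS channel with capacity $C$ and $F(\rho)=t$; conversely, if this inequality fails for $(C,t)$, no BIMS channel has capacity $C$ and $F(\rho)=t$.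
   Context: A BIMS (binary-input memoryless symmetric) channel is a memoryless channel with input alphabet $\{x_0,x_1\}$, finite output alphabet $\mathcal Y$ and transition probabilities $P_{Y|X}(y|x)$. It is symmetric in Gallager's sense: the columns of the $2\times|\mathcal Y|$ transition matrix (rows indexed by inputs) can be partitioned into submatrices such that, in each submatrix, every row is a permutation of every other row and every column is a permutation of every other column. Inputs are equiprobable, $P_X(x_0)=P_X(x_1)=\tfrac12$, and all logarithms are base $2$. The capacity $C$ of the channel is the mutual information $I(X;Y)$ under this input distribution. For $\rho>-1$, Gallager's function is defined by $$F(\rho)=\sum_{x}\tfrac12\sum_{y:\,P_{Y|X}(y|x)>0}P_{Y|X}(y|x)\left(\frac{\tfrac12\sum_{x'}P_{Y|X}(y|x')^{1/(1+\rho)}}{P_{Y|X}(y|x)^{1/(1+\rho)}}\right)^{\rho},$$ and $E_0(\rho)=-\log F(\rho)$. Let $h(p)=-p\log p-(1-p)\log(1-p)$ denote the binary entropy function, and let $h^{-1}$ be its inverse on $[0,\tfrac12]$. For $C\in[0,1]$ define $$F^{\rm bec}(\rho;C)=1+(2^{-\rho}-1)C,$$ $$F^{\rm bsc}(\rho;C)=2^{-\rho}\Bigl(\varepsilon^{1/(1+\rho)}+(1-\varepsilon)^{1/(1+\rho)}\Bigr)^{1+\rho},\qquad \varepsilon=h^{-1}(1-C).$$ These are the values of $F(\rho)$ for the binary erasure channel (BEC) and the binary symmetric channel (BSC) of capacity $C$. For $\rho\ne0$, $C^{\rm bec}(\cdot)$ and $C^{\rm bsc}(\cdot)$ denote the inverse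 functions of $C\mapsto F^{\rm bec}(\rho;C)$ and $C\mapsto F^{\rm bsc}(\rho;C)$ on $[0,1]$, respectively. *)

theory Defs
  imports Complex_Main "HOL-Library.Multiset" "HOL-Library.Disjoint_Sets"
begin

text \<open>A channel with input alphabet {x0,x1} = {False,True} (x0 = False, x1 = True),
  finite output alphabet Y and transition probabilities W x y = P(y|x).\<close>

definition bims :: "'y set \<Rightarrow> (bool \<Rightarrow> 'y \<Rightarrow> real) \<Rightarrow> bool" where
  "bims Y W \<longleftrightarrow> finite Y
     \<and> (\<forall>x. \<forall>y\<in>Y. 0 \<le> W x y)
     \<and> (\<forall>x. (\<Sum>y\<in>Y. W x y) = 1)
     \<and> (\<exists>P. partition_on Y P \<and>
          (\<forall>B\<in>P. image_mset (W False) (mset_set B) = image_mset (W True) (mset_set B)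
                 \<and> (\<forall>y\<in>B. \<forall>y'\<in>B. {#W False y, W True y#} = {#W False y', W True y'#})))"

definition out_prob :: "(bool \<Rightarrow> 'y \<Rightarrow> real) \<Rightarrow> 'y \<Rightarrow> real" where
  "out_prob W y = (\<Sum>x\<in>UNIV. W x y / 2)"

definition capacity :: "'y set \<Rightarrow> (bool \<Rightarrow> 'y \<Rightarrow> real) \<Rightarrow> real" where
  "capacity Y W = (\<Sum>x\<in>UNIV. (1/2) * (\<Sum>y\<in>{y\<in>Y. W x y > 0}.
       W x y * log 2 (W x y / out_prob W y)))"

definition gallager_F :: "real \<Rightarrow> 'y set \<Rightarrow> (bool \<Rightarrow> 'y \<Rightarrow> real) \<Rightarrow> real" where
  "gallager_F \<rho> Y W = (\<Sum>x\<in>UNIV. (1/2) * (\<Sum>y\<in>{y\<in>Y. W x y > 0}.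
       W x y * (((1/2) * (\<Sum>x'\<in>UNIV. W x' y powr (1/(1+\<rho>)))) / W x y powr (1/(1+\<rho>))) powr \<rho>))"

definition E0 :: "real \<Rightarrow> 'y set \<Rightarrow> (bool \<Rightarrow> 'y \<Rightarrow> real) \<Rightarrow> real" where
  "E0 \<rho> Y W = - log 2 (gallager_F \<rho> Y W)"

definition h :: "real \<Rightarrow> real" where
  "h p = (if p = 0 \<or> p = 1 then 0 else - p * log 2 p - (1 - p) * log 2 (1 - p))"

definition h_inv :: "real \<Rightarrow> real" where
  "h_inv q = (THE p. p \<in> {0..1/2} \<and> h p = q)"

definition F_bec :: "real \<Rightarrow> real \<Rightarrow> real" where
  "F_bec \<rho> C = 1 + (2 powr (-\<rho>) - 1) * C"

definition F_bsc :: "real \<Rightarrow> real \<Rightarrow> real" where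
  "F_bsc \<rho> C = (let \<epsilon> = h_inv (1 - C) in
     2 powr (-\<rho>) * (\<epsilon> powr (1/(1+\<rho>)) + (1 - \<epsilon>) powr (1/(1+\<rho>))) powr (1+\<rho>))"

text \<open>Inverses of C \<mapsto> F_bec(rho;C), C \<mapsto> F_bsc(rho;C) on [0,1] (rho \<noteq> 0).\<close>
definition C_bec :: "real \<Rightarrow> real \<Rightarrow> real" where
  "C_bec \<rho> t = (THE C. C \<in> {0..1} \<and> F_bec \<rho> C = t)"

definition C_bsc :: "real \<Rightarrow> real \<Rightarrow> real" where
  "C_bsc \<rho> t = (THE C. C \<in> {0..1} \<and> F_bsc \<rho> C = t)"

definition bec_Y :: "nat set" where "bec_Y = {0, 1, 2}"
definition bec_W :: "real \<Rightarrow> bool \<Rightarrow> nat \<Rightarrow> real" where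
  "bec_W e x y = (if y = 2 then e else if y = (if x then 1 else 0) then 1 - e else 0)"

definition bsc_Y :: "nat set" where "bsc_Y = {0, 1}"
definition bsc_W :: "real \<Rightarrow> bool \<Rightarrow> nat \<Rightarrow> real" where
  "bsc_W \<epsilon> x y = (if y = (if x then 1 else 0) then 1 - \<epsilon> else \<epsilon>)"

end

theory Submission
  imports Defs "HOL-Real_Asymp.Real_Asymp"
begin

(*
  Under equiprobable inputs every output letter y of a binary-input channel contributes
  w_y (1 - h(p_y)) to the capacity and w_y f(p_y) to F(rho), where w_y is the output
  probability, p_y = W(y|x0) / (W(y|x0) + W(y|x1)) the posterior of x0, and
  f(p) = 2^-rho (p^s + (1-p)^s)^(1+rho), s = 1/(1+rho), is the value of F for the BSC
  with crossover probability p.  Hence C = 1 - E[h(p_Y)] and F = E[f(p_Y)].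

  The analytic core is that, along 0 <= p <= 1/2, f is a concave function of the entropy
  h(p): the curve p |-> (h p, f p) lies below each of its tangents.  A hyperbolic
  substitution reduces this to the monotonicity of cosh(b)^rho sinh(rho b)/b.
  Jensen's inequality then gives F <= F_bsc(C) and the chord between p = 0 and p = 1/2
  gives F >= F_bec(C); this holds for every channel, symmetric or not.  Statements (ii)
  and (iii) follow because F_bsc and F_bec are strictly monotone in C in the direction
  given by the sign of rho.  Finally the BEC, the BSC, and their convex combinations
  (which are again symmetric channels of capacity C) realise every admissible value.
*)

section \<open>Binary entropy\<close>

lemma h_sym: "h (1 - p) = h p"
  unfolding h_def by (auto simp: algebra_simps)

lemma h_0 [simp]: "h 0 = 0" and h_1 [simp]: "h 1 = 0"
  unfolding h_def by auto

lemma h_half [simp]: "h (1/2) = 1"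
  unfolding h_def by (simp add: log_divide)

lemma h_interior: "0 < p \<Longrightarrow> p < 1 \<Longrightarrow> h p = - p * log 2 p - (1 - p) * log 2 (1 - p)"
  unfolding h_def by auto

lemma h_has_derivative:
  assumes "0 < p" "p < 1"
  shows "(h has_real_derivative log 2 ((1 - p) / p)) (at p)"
proof -
  let ?g = "\<lambda>x. - (x * ln x + (1 - x) * ln (1 - x)) / ln 2"
  have "(?g has_real_derivative - ((ln p + 1) + - (ln (1 - p) + 1)) / ln 2) (at p)"
    using assms by (auto intro!: derivative_eq_intros)
  moreover have "- ((ln p + 1) + - (ln (1 - p) + 1)) / ln 2 = log 2 ((1 - p) / p)"
    using assms by (simp add: log_def ln_div)
  moreover have ev: "\<forall>\<^sub>F x in nhds p. h x = ?g x"
  proof -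
    have "\<forall>\<^sub>F x in nhds p. x \<in> {0<..<1}"
      using assms by (intro eventually_nhds_in_open) auto
    then show ?thesis
      by eventually_elim (auto simp: h_interior log_def field_simps)
  qed
  ultimately show ?thesis
    using DERIV_cong_ev[OF refl ev refl] by simp
qed

lemma continuous_on_h: "continuous_on {0..1/2} h"
proof -
  have "continuous (at x within {0..1/2}) h" if x: "x \<in> {0..1/2}" for x
  proof (cases "x = 0")
    case False
    then have "0 < x" "x < 1" using x by auto
    then show ?thesis
      by (meson h_has_derivative DERIV_isCont continuous_at_imp_continuous_at_within)
  next
    case True
    have "((\<lambda>x::real. - x * log 2 x - (1 - x) * log 2 (1 - x)) \<longlongrightarrow> 0) (at_right 0)"
      by real_asymp
    moreover have "\<forall>\<^sub>F x in at_right 0. - x * log 2 x - (1 - x) * log 2 (1 - x) = h x"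
      unfolding eventually_at_right_field by (intro exI[of _ 1]) (auto simp: h_interior)
    ultimately have "(h \<longlongrightarrow> 0) (at_right 0)"
      by (simp add: tendsto_cong)
    then show ?thesis
      using True by (simp add: continuous_within at_within_Icc_at_right)
  qed
  then show ?thesis by (simp add: continuous_on_eq_continuous_within)
qed

lemma h_strict_mono:
  assumes "0 \<le> a" "a < b" "b \<le> 1/2"
  shows "h a < h b"
proof (rule DERIV_pos_imp_increasing_open[OF assms(2)])
  fix x assume "a < x" "x < b"
  then have "0 < x" "x < 1/2" using assms by auto
  moreover from this have "log 2 ((1 - x) / x) > 0" by (simp add: field_simps)
  ultimately show "\<exists>y. (h has_real_derivative y) (at x) \<and> 0 < y"
    using h_has_derivative[of x] by auto
qed (use continuous_on_subset[OF continuous_on_h] assms in auto)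

lemma h_range_half:
  assumes "0 \<le> p" "p \<le> 1/2"
  shows "0 \<le> h p \<and> h p \<le> 1"
proof -
  have "h 0 \<le> h p" using h_strict_mono[of 0 p] assms by (cases "p = 0") auto
  moreover have "h p \<le> h (1/2)"
  proof (cases "p < 1/2")
    case True
    then show ?thesis using h_strict_mono[of p "1/2"] assms by simp
  next
    case False
    then have "p = 1/2" using assms by linarith
    then show ?thesis by (metis order_refl)
  qed
  ultimately show ?thesis by simp
qed

lemma h_range:
  assumes "0 \<le> p" "p \<le> 1"
  shows "0 \<le> h p \<and> h p \<le> 1"
  using h_range_half[of p] h_range_half[of "1 - p"] h_sym[of p] assms by (cases "p \<le> 1/2") auto

lemma h_inj:
  assumes "0 \<le> a" "a \<le> 1/2" "0 \<le> b" "b \<le> 1/2" "h a = h b"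
  shows "a = b"
  using h_strict_mono[of a b] h_strict_mono[of b a] assms by (cases a b rule: linorder_cases) auto

lemma h_eq_h_cases:
  assumes "0 \<le> q" "q \<le> 1" "0 \<le> p" "p \<le> 1/2" "h q = h p"
  shows "q = p \<or> q = 1 - p"
  using h_inj[of q p] h_inj[of "1 - q" p] h_sym[of q] assms by (cases "q \<le> 1/2") auto

lemma h_inv:
  assumes "0 \<le> q" "q \<le> 1"
  shows "0 \<le> h_inv q \<and> h_inv q \<le> 1/2 \<and> h (h_inv q) = q"
proof -
  obtain p where p: "0 \<le> p" "p \<le> 1/2" "h p = q"
    using IVT'[of h 0 q "1/2"] continuous_on_h assms by auto
  have "(THE p. p \<in> {0..1/2} \<and> h p = q) = p"
    by (rule the_equality) (use p h_inj in auto)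
  then show ?thesis unfolding h_inv_def using p by simp
qed

lemma h_inv_h:
  assumes "0 \<le> p" "p \<le> 1/2"
  shows "h_inv (h p) = p"
  using h_inv[of "h p"] h_range_half[OF assms] h_inj[of "h_inv (h p)" p] assms by auto

lemma h_inv_strict_mono:
  assumes "0 \<le> q1" "q1 < q2" "q2 \<le> 1"
  shows "h_inv q1 < h_inv q2"
proof (rule ccontr)
  assume "\<not> ?thesis"
  then have "h (h_inv q2) \<le> h (h_inv q1)"
    using h_strict_mono[of "h_inv q2" "h_inv q1"] h_inv[of q1] h_inv[of q2] assms
    by (cases "h_inv q1 = h_inv q2") auto
  then show False using h_inv[of q1] h_inv[of q2] assms by auto
qed

section \<open>A hyperbolic inequality\<close>

text \<open>The analytic heart of the proof: it makes the function Theta below monotone.\<close>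
lemma sinh_cosh_inequality:
  fixes c y :: real
  assumes c: "c \<ge> 0" and y: "y \<ge> - c"
  shows "sinh y * cosh c \<le> y * cosh (c + y)"
proof -
  define E where "E = (\<lambda>y. y * cosh (c + y) - sinh y * cosh c)"
  have dE: "(E has_real_derivative (sinh c * sinh x + x * sinh (c + x))) (at x)" for x
  proof -
    have "(E has_real_derivative (cosh (c + x) + x * sinh (c + x) - cosh x * cosh c)) (at x)"
      unfolding E_def by (auto intro!: derivative_eq_intros)
    moreover have "cosh (c + x) + x * sinh (c + x) - cosh x * cosh c
        = sinh c * sinh x + x * sinh (c + x)"
      by (simp add: cosh_add algebra_simps)
    ultimately show ?thesis by simp
  qed
  \<comment> \<open>On \<open>[-c, \<infinity>)\<close> the derivative of E has the sign of x, so E is minimal at 0.\<close>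
  have "E 0 \<le> E y"
  proof (cases "y \<ge> 0")
    case True
    show ?thesis
    proof (rule DERIV_nonneg_imp_nondecreasing[OF True])
      fix x assume "0 \<le> x" "x \<le> y"
      then have "0 \<le> sinh c * sinh x + x * sinh (c + x)" using c by simp
      then show "\<exists>d. (E has_real_derivative d) (at x) \<and> 0 \<le> d" using dE by blast
    qed
  next
    case False
    show ?thesis
    proof (rule DERIV_nonpos_imp_nonincreasing[of y 0 E])
      fix x assume x: "y \<le> x" "x \<le> 0"
      have "sinh c * sinh x \<le> 0" using c x by (simp add: mult_nonneg_nonpos)
      moreover have "x * sinh (c + x) \<le> 0" using c x y by (simp add: mult_nonpos_nonneg)
      ultimately show "\<exists>d. (E has_real_derivative d) (at x) \<and> d \<le> 0" using dE by fastforce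
    qed (use False in simp)
  qed
  then show ?thesis unfolding E_def by simp
qed

text \<open>The hyperbolic form of the slope dF/dh, as a function of the half log-likelihood ratio b.\<close>
definition Theta :: "real \<Rightarrow> real \<Rightarrow> real" where
  "Theta \<rho> b = cosh b powr \<rho> * sinh (\<rho> * b) / b"

lemma Theta_mono:
  assumes r: "\<rho> > -1" and b: "0 < b1" "b1 \<le> b2"
  shows "Theta \<rho> b1 \<le> Theta \<rho> b2"
  unfolding Theta_def
proof (rule DERIV_nonneg_imp_nondecreasing[OF b(2)])
  fix x assume "b1 \<le> x" "x \<le> b2"
  then have x0: "x > 0" using b by simp
  define N where "N = cosh x powr \<rho> * sinh (\<rho> * x)"
  define N' where
    "N' = \<rho> * cosh x powr (\<rho> - 1) * sinh x * sinh (\<rho> * x) + cosh x powr \<rho> * (cosh (\<rho> * x) * \<rho>)"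
  have dN: "((\<lambda>x. cosh x powr \<rho> * sinh (\<rho> * x)) has_real_derivative N') (at x)"
  proof -
    have "((\<lambda>x. cosh x powr \<rho>) has_real_derivative \<rho> * cosh x powr (\<rho> - of_nat 1) * sinh x) (at x)"
      by (rule DERIV_fun_powr) (auto intro!: derivative_eq_intros)
    then have d1: "((\<lambda>x. cosh x powr \<rho>) has_real_derivative \<rho> * cosh x powr (\<rho> - 1) * sinh x) (at x)"
      by simp
    have d2: "((\<lambda>x. sinh (\<rho> * x)) has_real_derivative cosh (\<rho> * x) * \<rho>) (at x)"
      by (auto intro!: derivative_eq_intros)
    show ?thesis
      using DERIV_mult[OF d1 d2] unfolding N'_def by (simp add: algebra_simps)
  qed
  have d: "((\<lambda>x. cosh x powr \<rho> * sinh (\<rho> * x) / x) has_real_derivative (N' * x - N) / (x * x)) (at x)"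
    using DERIV_divide[OF dN DERIV_ident] x0 unfolding N_def by simp
  have numerator: "N' * x - N = cosh x powr (\<rho> - 1) * (\<rho> * x * cosh (x + \<rho> * x) - sinh (\<rho> * x) * cosh x)"
  proof -
    have "cosh x powr \<rho> = cosh x powr (\<rho> - 1) * cosh x"
      using powr_add[of "cosh x" "\<rho> - 1" 1] by simp
    then show ?thesis unfolding N'_def N_def by (simp add: cosh_add algebra_simps)
  qed
  have "sinh (\<rho> * x) * cosh x \<le> (\<rho> * x) * cosh (x + \<rho> * x)"
  proof (rule sinh_cosh_inequality)
    have "(\<rho> + 1) * x > 0" using x0 r by simp
    then show "\<rho> * x \<ge> - x" by (simp add: algebra_simps)
  qed (use x0 in auto)
  then have "(N' * x - N) / (x * x) \<ge> 0" unfolding numerator by simp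
  then show "\<exists>y. ((\<lambda>x. cosh x powr \<rho> * sinh (\<rho> * x) / x) has_real_derivative y) (at x) \<and> 0 \<le> y"
    using d by blast
qed

section \<open>Gallager's function of the binary symmetric channel\<close>

text \<open>F_bin rho p is the value of F(rho) for the BSC with crossover probability p.\<close>
definition F_bin :: "real \<Rightarrow> real \<Rightarrow> real" where
  "F_bin \<rho> p = 2 powr (-\<rho>) * (p powr (1/(1+\<rho>)) + (1 - p) powr (1/(1+\<rho>))) powr (1+\<rho>)"

lemma F_bsc_eq_F_bin: "F_bsc \<rho> C = F_bin \<rho> (h_inv (1 - C))"
  unfolding F_bsc_def F_bin_def Let_def ..

lemma F_bin_sym: "F_bin \<rho> (1 - p) = F_bin \<rho> p"
  unfolding F_bin_def by (simp add: add.commute)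

lemma F_bin_0: "\<rho> > -1 \<Longrightarrow> F_bin \<rho> 0 = 2 powr (-\<rho>)"
  unfolding F_bin_def by simp

lemma F_bin_1: "\<rho> > -1 \<Longrightarrow> F_bin \<rho> 1 = 2 powr (-\<rho>)"
  using F_bin_sym[of \<rho> 0] F_bin_0 by simp

lemma F_bin_half:
  assumes r: "\<rho> > -1"
  shows "F_bin \<rho> (1/2) = 1"
proof -
  define s where "s = 1 / (1 + \<rho>)"
  have "(1/2::real) powr s + (1 - 1/2) powr s = 2 powr (1 - s)"
    by (simp add: powr_diff powr_divide powr_minus_divide)
  then have "((1/2::real) powr s + (1 - 1/2) powr s) powr (1 + \<rho>) = 2 powr ((1 - s) * (1 + \<rho>))"
    by (simp add: powr_powr)
  also have "(1 - s) * (1 + \<rho>) = \<rho>" unfolding s_def using r by (simp add: field_simps)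
  finally show ?thesis unfolding F_bin_def s_def[symmetric] by (simp add: powr_minus)
qed

lemma continuous_on_F_bin:
  assumes r: "\<rho> > -1"
  shows "continuous_on {0..1} (F_bin \<rho>)"
proof -
  have s0: "1 / (1 + \<rho>) > 0" using r by simp
  have "continuous_on {0..1} (\<lambda>p::real. p powr (1/(1+\<rho>)) + (1 - p) powr (1/(1+\<rho>)))"
    by (intro continuous_intros continuous_on_powr') (use s0 in auto)
  moreover have "p powr (1/(1+\<rho>)) + (1 - p) powr (1/(1+\<rho>)) > 0" if "p \<in> {0..1}" for p :: real
    using that by (cases "p = 0") (auto intro: add_pos_nonneg)
  ultimately have "continuous_on {0..1}
      (\<lambda>p::real. (p powr (1/(1+\<rho>)) + (1 - p) powr (1/(1+\<rho>))) powr (1 + \<rho>))"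
    by (intro continuous_on_powr' continuous_on_const) fastforce+
  then show ?thesis unfolding F_bin_def by (rule continuous_on_mult_left)
qed

text \<open>
  The derivative of F_bin is best expressed through the half log-likelihood ratio
  beta = ln((1-p)/p) / (2(1+rho)): it equals 2 cosh(beta)^rho sinh(rho beta).
\<close>
definition beta :: "real \<Rightarrow> real \<Rightarrow> real" where
  "beta \<rho> p = ln ((1 - p) / p) / (2 * (1 + \<rho>))"

definition dF_bin :: "real \<Rightarrow> real \<Rightarrow> real" where
  "dF_bin \<rho> p = 2 * cosh (beta \<rho> p) powr \<rho> * sinh (\<rho> * beta \<rho> p)"

lemma exp_add_exp_cosh: "exp (x::real) + exp y = 2 * exp ((x + y) / 2) * cosh ((x - y) / 2)"
  and exp_diff_exp_sinh: "exp (x::real) - exp y = 2 * exp ((x + y) / 2) * sinh ((x - y) / 2)"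
proof -
  have "exp ((x + y) / 2) * exp ((x - y) / 2) = exp x"
    and "exp ((x + y) / 2) * exp (- ((x - y) / 2)) = exp y"
    by (simp_all add: exp_add[symmetric] field_simps)
  then show "exp x + exp y = 2 * exp ((x + y) / 2) * cosh ((x - y) / 2)"
    and "exp x - exp y = 2 * exp ((x + y) / 2) * sinh ((x - y) / 2)"
    by (simp_all add: cosh_field_def sinh_field_def algebra_simps)
qed

text \<open>The chain-rule form of the derivative, rewritten in hyperbolic functions of beta.\<close>
lemma dF_bin_identity:
  assumes r: "\<rho> > -1" and p: "0 < p" "p < 1"
  shows "2 powr (-\<rho>) * (p powr (1/(1+\<rho>)) + (1 - p) powr (1/(1+\<rho>))) powr \<rho>
          * (p powr (1/(1+\<rho>) - 1) - (1 - p) powr (1/(1+\<rho>) - 1)) = dF_bin \<rho> p"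
proof -
  define s where "s = 1 / (1 + \<rho>)"
  define L where "L = ln p"
  define M where "M = ln (1 - p)"
  define b where "b = beta \<rho> p"
  have rs: "\<rho> * s = 1 - s" unfolding s_def using r by (simp add: field_simps)
  have b: "b = s * (M - L) / 2" unfolding b_def beta_def s_def L_def M_def using p r
    by (simp add: ln_div field_simps)
  have pw: "x powr a = exp (a * ln x)" if "x > 0" for x a :: real using that by (simp add: powr_def)
  have "p powr s + (1 - p) powr s = 2 * exp (s * (L + M) / 2) * cosh ((s * L - s * M) / 2)"
    using p exp_add_exp_cosh[of "s * L" "s * M"] by (simp add: pw L_def M_def algebra_simps)
  also have "(s * L - s * M) / 2 = - b" unfolding b by (simp add: field_simps)
  finally have sum: "(p powr s + (1 - p) powr s) powr \<rho>
      = 2 powr \<rho> * cosh b powr \<rho> * exp (\<rho> * (s * (L + M) / 2))"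
    by (simp add: powr_mult exp_powr_real algebra_simps)
  have "p powr (s - 1) - (1 - p) powr (s - 1)
      = 2 * exp ((s - 1) * (L + M) / 2) * sinh (((s - 1) * L - (s - 1) * M) / 2)"
    using p exp_diff_exp_sinh[of "(s - 1) * L" "(s - 1) * M"]
    by (simp add: pw L_def M_def algebra_simps)
  also have "((s - 1) * L - (s - 1) * M) / 2 = \<rho> * b"
  proof -
    have "\<rho> * b = (\<rho> * s) * (M - L) / 2" unfolding b by simp
    then show ?thesis unfolding rs by (simp add: algebra_simps)
  qed
  finally have diff: "p powr (s - 1) - (1 - p) powr (s - 1)
      = 2 * exp ((s - 1) * (L + M) / 2) * sinh (\<rho> * b)" .
  have "\<rho> * (s * (L + M) / 2) + (s - 1) * (L + M) / 2 = (\<rho> * s + s - 1) * (L + M) / 2"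
    by (simp add: field_simps)
  then have ex: "exp (\<rho> * (s * (L + M) / 2)) * exp ((s - 1) * (L + M) / 2) = 1"
    using rs by (simp add: exp_add[symmetric])
  have "2 powr (-\<rho>) * 2 powr \<rho> = 1" by (simp add: powr_add[symmetric])
  then show ?thesis
    unfolding s_def[symmetric] sum diff dF_bin_def b_def[symmetric]
    using ex by (simp add: algebra_simps)
qed

lemma F_bin_has_derivative:
  assumes r: "\<rho> > -1" and p: "0 < p" "p < 1"
  shows "(F_bin \<rho> has_real_derivative dF_bin \<rho> p) (at p)"
proof -
  define s where "s = 1 / (1 + \<rho>)"
  have rs: "(1 + \<rho>) * s = 1" unfolding s_def using r by simp
  have d1: "((\<lambda>x. x powr s) has_real_derivative s * p powr (s - 1)) (at p)"
    using has_real_derivative_powr[of p s] p by simp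
  have "((\<lambda>x. (1 - x) powr s) has_real_derivative s * (1 - p) powr (s - of_nat 1) * (0 - 1)) (at p)"
    by (rule DERIV_fun_powr) (use p in \<open>auto intro!: derivative_eq_intros\<close>)
  then have d2: "((\<lambda>x. (1 - x) powr s) has_real_derivative - (s * (1 - p) powr (s - 1))) (at p)"
    by simp
  define S' where "S' = s * p powr (s - 1) + - (s * (1 - p) powr (s - 1))"
  have "p powr s + (1 - p) powr s > 0" using p by (intro add_pos_nonneg) auto
  from DERIV_fun_powr[OF DERIV_add[OF d1 d2] this, of "1 + \<rho>"]
  have "(F_bin \<rho> has_real_derivative
      2 powr (-\<rho>) * ((1 + \<rho>) * (p powr s + (1 - p) powr s) powr (1 + \<rho> - of_nat 1) * S')) (at p)"
    unfolding F_bin_def s_def[symmetric] S'_def by (rule DERIV_cmult)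
  moreover have "(1 + \<rho>) * S'
      = ((1 + \<rho>) * s) * p powr (s - 1) - ((1 + \<rho>) * s) * (1 - p) powr (s - 1)"
    unfolding S'_def by (simp add: algebra_simps)
  then have "(1 + \<rho>) * S' = p powr (s - 1) - (1 - p) powr (s - 1)"
    unfolding rs by simp
  then have "2 powr (-\<rho>) * ((1 + \<rho>) * (p powr s + (1 - p) powr s) powr (1 + \<rho> - of_nat 1) * S')
      = 2 powr (-\<rho>) * (p powr s + (1 - p) powr s) powr \<rho> * (p powr (s - 1) - (1 - p) powr (s - 1))"
    by (simp add: mult.assoc)
  also have "\<dots> = dF_bin \<rho> p"
    unfolding s_def by (rule dF_bin_identity[OF r p])
  ultimately show ?thesis by simp
qed

lemma beta_pos: "0 < p \<Longrightarrow> p < 1/2 \<Longrightarrow> \<rho> > -1 \<Longrightarrow> beta \<rho> p > 0"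
  unfolding beta_def by (intro divide_pos_pos ln_gt_zero) (auto simp: field_simps)

lemma beta_strict_antimono:
  assumes "0 < p1" "p1 < p2" "p2 < 1" "\<rho> > -1"
  shows "beta \<rho> p2 < beta \<rho> p1"
proof -
  have "(1 - p2) / p2 < (1 - p1) / p1" using assms by (simp add: field_simps)
  then have "ln ((1 - p2) / p2) < ln ((1 - p1) / p1)" using assms by simp
  then show ?thesis unfolding beta_def using assms by (intro divide_strict_right_mono) auto
qed

lemma dF_bin_eq_Theta:
  assumes r: "\<rho> > -1" and p: "0 < p" "p < 1/2"
  shows "dF_bin \<rho> p = ln ((1 - p) / p) * Theta \<rho> (beta \<rho> p) / (1 + \<rho>)"
proof -
  have t: "ln ((1 - p) / p) = 2 * (1 + \<rho>) * beta \<rho> p" unfolding beta_def using r by simp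
  define b where "b = beta \<rho> p"
  define X where "X = cosh b powr \<rho> * sinh (\<rho> * b)"
  have "b \<noteq> 0" "1 + \<rho> \<noteq> 0" using beta_pos[OF p r] r unfolding b_def by auto
  have "ln ((1 - p) / p) * Theta \<rho> b / (1 + \<rho>) = (1 + \<rho>) * (2 * (b * (X / b))) / (1 + \<rho>)"
    unfolding t b_def[symmetric] Theta_def X_def by (simp only: mult_ac)
  also have "\<dots> = 2 * (b * (X / b))" using \<open>1 + \<rho> \<noteq> 0\<close> by (rule nonzero_mult_div_cancel_left)
  also have "\<dots> = 2 * X" using \<open>b \<noteq> 0\<close> by simp
  finally show ?thesis unfolding dF_bin_def X_def b_def by simp
qed

lemma dF_bin_pos: "\<rho> > 0 \<Longrightarrow> 0 < p \<Longrightarrow> p < 1/2 \<Longrightarrow> dF_bin \<rho> p > 0"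
  using beta_pos[of p \<rho>] unfolding dF_bin_def by simp

lemma dF_bin_neg:
  assumes "\<rho> < 0" "\<rho> > -1" "0 < p" "p < 1/2"
  shows "dF_bin \<rho> p < 0"
proof -
  have "\<rho> * beta \<rho> p < 0" using beta_pos[of p \<rho>] assms by (simp add: mult_neg_pos)
  then show ?thesis using assms unfolding dF_bin_def by (simp add: mult_pos_neg)
qed

lemma F_bin_strict_mono:
  assumes r: "\<rho> > 0" and ab: "0 \<le> a" "a < b" "b \<le> 1/2"
  shows "F_bin \<rho> a < F_bin \<rho> b"
proof (rule DERIV_pos_imp_increasing_open[OF ab(2)])
  fix x assume "a < x" "x < b"
  then have "0 < x" "x < 1/2" using ab by auto
  then show "\<exists>y. (F_bin \<rho> has_real_derivative y) (at x) \<and> 0 < y"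
    using F_bin_has_derivative[of \<rho> x] dF_bin_pos[OF r] r by auto
qed (use continuous_on_subset[OF continuous_on_F_bin] r ab in auto)

lemma F_bin_strict_antimono:
  assumes r: "\<rho> < 0" "\<rho> > -1" and ab: "0 \<le> a" "a < b" "b \<le> 1/2"
  shows "F_bin \<rho> a > F_bin \<rho> b"
proof (rule DERIV_neg_imp_decreasing_open[OF ab(2)])
  fix x assume "a < x" "x < b"
  then have "0 < x" "x < 1/2" using ab by auto
  then show "\<exists>y. (F_bin \<rho> has_real_derivative y) (at x) \<and> y < 0"
    using F_bin_has_derivative[of \<rho> x] dF_bin_neg[OF r] r by auto
qed (use continuous_on_subset[OF continuous_on_F_bin] r ab in auto)

section \<open>F_bin is a concave function of the entropy\<close>

text \<open>
  The slope dF/dh of the curve p |-> (h p, F_bin rho p) at an interior point p0 of (0,1/2).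
  Via the hyperbolic form of dF_bin it equals ln 2 Theta(beta p0) / (1 + rho), which is
  monotone in p0; this is what makes the curve concave.
\<close>
definition entropy_slope :: "real \<Rightarrow> real \<Rightarrow> real" where
  "entropy_slope \<rho> p0 = dF_bin \<rho> p0 * ln 2 / ln ((1 - p0) / p0)"

lemma llr_pos: "0 < (p::real) \<Longrightarrow> p < 1/2 \<Longrightarrow> ln ((1 - p) / p) > 0"
  by (intro ln_gt_zero) (auto simp: field_simps)

lemma entropy_slope_eq_Theta:
  assumes r: "\<rho> > -1" and p0: "0 < p0" "p0 < 1/2"
  shows "entropy_slope \<rho> p0 = Theta \<rho> (beta \<rho> p0) * ln 2 / (1 + \<rho>)"
  using llr_pos[OF p0] unfolding entropy_slope_def dF_bin_eq_Theta[OF r p0] by simp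

lemma F_bin_minus_tangent_has_derivative:
  assumes r: "\<rho> > -1" and p0: "0 < p0" "p0 < 1/2" and x: "0 < x" "x < 1/2"
  shows "((\<lambda>x. F_bin \<rho> x - entropy_slope \<rho> p0 * h x) has_real_derivative
          ln ((1 - x) / x) / (1 + \<rho>) * (Theta \<rho> (beta \<rho> x) - Theta \<rho> (beta \<rho> p0))) (at x)"
proof -
  have "((\<lambda>x. F_bin \<rho> x - entropy_slope \<rho> p0 * h x) has_real_derivative
          dF_bin \<rho> x - entropy_slope \<rho> p0 * log 2 ((1 - x) / x)) (at x)"
    using x by (intro DERIV_diff DERIV_cmult F_bin_has_derivative[OF r] h_has_derivative) auto
  moreover have "dF_bin \<rho> x - entropy_slope \<rho> p0 * log 2 ((1 - x) / x)
      = ln ((1 - x) / x) / (1 + \<rho>) * (Theta \<rho> (beta \<rho> x) - Theta \<rho> (beta \<rho> p0))"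
  proof -
    have alg: "t * A / c - (B * l / c) * (t / l) = t / c * (A - B)" if "l \<noteq> 0" "c \<noteq> 0"
      for t A B c l :: real
      using that by (simp add: field_simps)
    show ?thesis
      unfolding dF_bin_eq_Theta[OF r x] entropy_slope_eq_Theta[OF r p0] log_def
      by (rule alg) (use r in auto)
  qed
  ultimately show ?thesis by simp
qed

lemma F_bin_below_tangent_half:
  assumes r: "\<rho> > -1" and p0: "0 < p0" "p0 < 1/2" and p: "0 \<le> p" "p \<le> 1/2"
  shows "F_bin \<rho> p \<le> F_bin \<rho> p0 + entropy_slope \<rho> p0 * (h p - h p0)"
proof -
  define \<phi> where "\<phi> = (\<lambda>x. F_bin \<rho> x - entropy_slope \<rho> p0 * h x)"
  have d\<phi>: "(\<phi> has_real_derivative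
      ln ((1 - x) / x) / (1 + \<rho>) * (Theta \<rho> (beta \<rho> x) - Theta \<rho> (beta \<rho> p0))) (at x)"
    if "0 < x" "x < 1/2" for x
    unfolding \<phi>_def using F_bin_minus_tangent_has_derivative[OF r p0 that] .
  have cont: "continuous_on {a..b} \<phi>" if "0 \<le> a" "b \<le> 1/2" for a b
    unfolding \<phi>_def using that
    by (intro continuous_intros continuous_on_subset[OF continuous_on_F_bin[OF r]]
        continuous_on_subset[OF continuous_on_h]) auto
  have factor_pos: "ln ((1 - x) / x) / (1 + \<rho>) > 0" if "0 < x" "x < 1/2" for x
    using llr_pos[OF that] r by simp
  \<comment> \<open>phi increases up to p0 and decreases after it, since beta is decreasing and Theta increasing.\<close>
  have "\<phi> p \<le> \<phi> p0"
  proof (cases "p \<le> p0")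
    case True
    show ?thesis
    proof (rule DERIV_nonneg_imp_increasing_open[OF True _ cont])
      fix x assume x: "p < x" "x < p0"
      then have x': "0 < x" "x < 1/2" using p p0 by auto
      have "Theta \<rho> (beta \<rho> p0) \<le> Theta \<rho> (beta \<rho> x)"
        using Theta_mono[OF r beta_pos[OF p0 r]] beta_strict_antimono[of x p0 \<rho>] x x' p0 r by simp
      then have "0 \<le> ln ((1 - x) / x) / (1 + \<rho>) * (Theta \<rho> (beta \<rho> x) - Theta \<rho> (beta \<rho> p0))"
        using factor_pos[OF x'] by (intro mult_nonneg_nonneg) auto
      then show "\<exists>y. (\<phi> has_real_derivative y) (at x) \<and> 0 \<le> y"
        using d\<phi>[OF x'] by blast
    qed (use p p0 in auto)
  next
    case False
    show ?thesis
    proof (rule DERIV_nonpos_imp_decreasing_open[of p0 p, OF _ _ cont])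
      fix x assume x: "p0 < x" "x < p"
      then have x': "0 < x" "x < 1/2" using p p0 by auto
      have "Theta \<rho> (beta \<rho> x) \<le> Theta \<rho> (beta \<rho> p0)"
        using Theta_mono[OF r beta_pos[OF x' r]] beta_strict_antimono[of p0 x \<rho>] x x' p0 r by simp
      then have "ln ((1 - x) / x) / (1 + \<rho>) * (Theta \<rho> (beta \<rho> x) - Theta \<rho> (beta \<rho> p0)) \<le> 0"
        using factor_pos[OF x'] by (intro mult_nonneg_nonpos) auto
      then show "\<exists>y. (\<phi> has_real_derivative y) (at x) \<and> y \<le> 0"
        using d\<phi>[OF x'] by blast
    qed (use p p0 False in auto)
  qed
  then show ?thesis unfolding \<phi>_def by (simp add: algebra_simps)
qed

text \<open>By the symmetry p <-> 1 - p the tangent bound holds on all of [0,1].\<close>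
lemma F_bin_below_tangent:
  assumes r: "\<rho> > -1" and p0: "0 < p0" "p0 < 1/2" and p: "0 \<le> p" "p \<le> 1"
  shows "F_bin \<rho> p \<le> F_bin \<rho> p0 + entropy_slope \<rho> p0 * (h p - h p0)"
  using F_bin_below_tangent_half[OF r p0, of p] F_bin_below_tangent_half[OF r p0, of "1 - p"] p
  by (cases "p \<le> 1/2") (auto simp: F_bin_sym h_sym)

text \<open>
  Lower bound: the curve lies above the chord joining its endpoints p = 0 and p = 1/2,
  i.e. above the line h |-> 2^-rho + (1 - 2^-rho) h; averaging this line yields F_bec.
\<close>
lemma F_bin_above_chord:
  assumes r: "\<rho> > -1" and p: "0 \<le> p" "p \<le> 1"
  shows "1 + (2 powr (-\<rho>) - 1) * (1 - h p) \<le> F_bin \<rho> p"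
proof -
  have chord_half: "1 + (2 powr (-\<rho>) - 1) * (1 - h q) \<le> F_bin \<rho> q" if q: "0 \<le> q" "q \<le> 1/2" for q
  proof -
    consider "q = 0" | "q = 1/2" | "0 < q \<and> q < 1/2" using q by linarith
    then show ?thesis
    proof cases
      case 1
      then show ?thesis using F_bin_0[OF r] by simp
    next
      case 2
      show ?thesis unfolding 2 using F_bin_half[OF r] by simp
    next
      case 3
      define k where "k = entropy_slope \<rho> q"
      have "2 powr (-\<rho>) \<le> F_bin \<rho> q - k * h q" and "1 \<le> F_bin \<rho> q + k * (1 - h q)"
        using F_bin_below_tangent[OF r, of q 0] F_bin_below_tangent[OF r, of q "1/2"] 3
        unfolding k_def F_bin_0[OF r] F_bin_half[OF r] by auto
      moreover have "0 \<le> h q" "h q \<le> 1" using h_range_half q by auto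
      ultimately have "(1 - h q) * 2 powr (-\<rho>) + h q * 1
          \<le> (1 - h q) * (F_bin \<rho> q - k * h q) + h q * (F_bin \<rho> q + k * (1 - h q))"
        by (intro add_mono mult_left_mono) auto
      then show ?thesis by (simp add: algebra_simps)
    qed
  qed
  show ?thesis
    using chord_half[of p] chord_half[of "1 - p"] p by (cases "p \<le> 1/2") (auto simp: F_bin_sym h_sym)
qed

lemma extreme_average_entropy:
  fixes w pp :: "'y \<Rightarrow> real"
  assumes Y: "finite Y" and w: "\<forall>y\<in>Y. w y \<ge> 0" and ws: "(\<Sum>y\<in>Y. w y) = 1"
    and pp: "\<forall>y\<in>Y. 0 \<le> pp y \<and> pp y \<le> 1"
    and p0: "p0 = 0 \<or> p0 = 1/2" and hp0: "h p0 = (\<Sum>y\<in>Y. w y * h (pp y))"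
    and y: "y \<in> Y" "w y \<noteq> 0"
  shows "pp y = p0 \<or> pp y = 1 - p0"
proof -
  have hY: "\<forall>y\<in>Y. 0 \<le> h (pp y) \<and> h (pp y) \<le> 1" using pp h_range by blast
  have "h (pp y) = h p0"
    using p0
  proof
    assume p0: "p0 = 0"
    then have "(\<Sum>y\<in>Y. w y * h (pp y)) = 0" using hp0 by simp
    then have "w y * h (pp y) = 0"
      using sum_nonneg_eq_0_iff[OF Y, of "\<lambda>y. w y * h (pp y)"] w hY y by auto
    then show ?thesis using p0 y by simp
  next
    assume p0: "p0 = 1/2"
    have "(\<Sum>y\<in>Y. w y * (1 - h (pp y))) = (\<Sum>y\<in>Y. w y) - (\<Sum>y\<in>Y. w y * h (pp y))"
      by (simp add: algebra_simps sum_subtractf)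
    then have "(\<Sum>y\<in>Y. w y * (1 - h (pp y))) = 0" using hp0 ws by (simp add: p0)
    then have "w y * (1 - h (pp y)) = 0"
      using sum_nonneg_eq_0_iff[OF Y, of "\<lambda>y. w y * (1 - h (pp y))"] w hY y by auto
    then show ?thesis using y by (simp add: p0)
  qed
  then show ?thesis using h_eq_h_cases[of "pp y" p0] pp y p0 by auto
qed

lemma F_bin_jensen:
  fixes w pp :: "'y \<Rightarrow> real"
  assumes Y: "finite Y" and r: "\<rho> > -1"
    and w: "\<forall>y\<in>Y. w y \<ge> 0" and ws: "(\<Sum>y\<in>Y. w y) = 1"
    and pp: "\<forall>y\<in>Y. 0 \<le> pp y \<and> pp y \<le> 1"
    and p0: "0 \<le> p0" "p0 \<le> 1/2" and hp0: "h p0 = (\<Sum>y\<in>Y. w y * h (pp y))"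
  shows "(\<Sum>y\<in>Y. w y * F_bin \<rho> (pp y)) \<le> F_bin \<rho> p0"
proof (cases "0 < p0 \<and> p0 < 1/2")
  case True
  define k where "k = entropy_slope \<rho> p0"
  have "(\<Sum>y\<in>Y. w y * F_bin \<rho> (pp y)) \<le> (\<Sum>y\<in>Y. w y * (F_bin \<rho> p0 + k * (h (pp y) - h p0)))"
    unfolding k_def using F_bin_below_tangent[OF r] True w pp
    by (intro sum_mono mult_left_mono) auto
  also have "\<dots> = F_bin \<rho> p0 * (\<Sum>y\<in>Y. w y) + k * ((\<Sum>y\<in>Y. w y * h (pp y)) - h p0 * (\<Sum>y\<in>Y. w y))"
    by (simp add: algebra_simps sum.distrib sum_distrib_left sum_distrib_right sum_subtractf)
  also have "\<dots> = F_bin \<rho> p0" using ws hp0 by simp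
  finally show ?thesis .
next
  case False
  then have p0': "p0 = 0 \<or> p0 = 1/2" using p0 by linarith
  have "w y * F_bin \<rho> (pp y) = w y * F_bin \<rho> p0" if "y \<in> Y" for y
    using extreme_average_entropy[OF Y w ws pp p0' hp0 that] F_bin_sym[of \<rho> p0]
    by (cases "w y = 0") auto
  then have "(\<Sum>y\<in>Y. w y * F_bin \<rho> (pp y)) = (\<Sum>y\<in>Y. w y * F_bin \<rho> p0)"
    by (rule sum.cong[OF refl])
  then have "(\<Sum>y\<in>Y. w y * F_bin \<rho> (pp y)) = (\<Sum>y\<in>Y. w y) * F_bin \<rho> p0"
    by (simp add: sum_distrib_right)
  then show ?thesis using ws by simp
qed

section \<open>Capacity and F as averages over the output letters\<close>

text \<open>
  Contributions of one output letter with transition probabilities a = W(y|x0), b = W(y|x1):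
  its output probability (a+b)/2 times a function of the posterior a/(a+b).
\<close>
definition cap_term :: "real \<Rightarrow> real \<Rightarrow> real" where
  "cap_term a b = (a + b) / 2 * (1 - h (a / (a + b)))"

definition F_term :: "real \<Rightarrow> real \<Rightarrow> real \<Rightarrow> real" where
  "F_term \<rho> a b = (a + b) / 2 * F_bin \<rho> (a / (a + b))"

lemma cap_term_eq:
  fixes a b :: real
  assumes a: "a \<ge> 0" and b: "b \<ge> 0"
  shows "(1/2) * ((if a > 0 then a * log 2 (a / (a/2 + b/2)) else 0)
               + (if b > 0 then b * log 2 (b / (a/2 + b/2)) else 0)) = cap_term a b"
proof (cases "a > 0 \<and> b > 0")
  case True
  define c where "c = a + b"
  define p where "p = a / c"
  have c: "c > 0" unfolding c_def using True by simp
  have p: "0 < p" "p < 1" unfolding p_def c_def using True by (auto simp: field_simps)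
  have ha: "a = c * p" and hb: "b = c * (1 - p)" unfolding p_def c_def using True by (auto simp: field_simps)
  have e: "a / (a/2 + b/2) = 2 * p" "b / (a/2 + b/2) = 2 * (1 - p)"
    unfolding ha hb using c by (auto simp: field_simps)
  have la: "log 2 (a / (a/2 + b/2)) = 1 + log 2 p"
    unfolding e(1) using p by (subst log_mult) auto
  have lb: "log 2 (b / (a/2 + b/2)) = 1 + log 2 (1 - p)"
    unfolding e(2) using p by (subst log_mult) auto
  have "(1/2) * ((if a > 0 then a * log 2 (a / (a/2 + b/2)) else 0)
               + (if b > 0 then b * log 2 (b / (a/2 + b/2)) else 0))
      = (1/2) * (c * p * (1 + log 2 p) + c * (1 - p) * (1 + log 2 (1 - p)))"
    using True unfolding la lb by (simp add: ha[symmetric] hb[symmetric])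
  also have "\<dots> = c / 2 * (1 - h p)" using p by (simp add: h_interior algebra_simps)
  finally show ?thesis unfolding cap_term_def c_def p_def by simp
next
  case False
  then consider "a = 0" | "b = 0" using a b by linarith
  then show ?thesis
    by cases (use a b in \<open>auto simp: cap_term_def log_divide\<close>)
qed

lemma F_term_eq:
  fixes a b :: real
  assumes a: "a \<ge> 0" and b: "b \<ge> 0" and r: "\<rho> > -1"
  defines "s \<equiv> 1 / (1 + \<rho>)"
  shows "(1/2) * ((if a > 0 then a * (((1/2) * (a powr s + b powr s)) / a powr s) powr \<rho> else 0)
               + (if b > 0 then b * (((1/2) * (a powr s + b powr s)) / b powr s) powr \<rho> else 0))
         = F_term \<rho> a b"
proof (cases "a + b > 0")
  case False
  then show ?thesis using a b by (simp add: F_term_def)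
next
  case True
  define c where "c = a + b"
  define M where "M = (1/2) * (a powr s + b powr s)"
  have c: "c > 0" unfolding c_def using True .
  have rs1: "(1 + \<rho>) * s = 1" unfolding s_def using r by simp
  have M: "M > 0" unfolding M_def using a b True
    by (cases "a > 0") (auto intro: add_pos_nonneg add_nonneg_pos)
  \<comment> \<open>Each letter x contributes W^s M^rho, so the average is M^(1+rho).\<close>
  have letter: "(if x > 0 then x * (M / x powr s) powr \<rho> else 0) = x powr s * M powr \<rho>"
    if "x \<ge> 0" for x :: real
  proof (cases "x > 0")
    case True
    have "x * (M / x powr s) powr \<rho> = x powr (1 - s * \<rho>) * M powr \<rho>"
      using True M by (simp add: powr_divide powr_powr powr_diff)
    also have "1 - s * \<rho> = s" using rs1 by (simp add: algebra_simps)
    finally show ?thesis using True by simp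
  qed (use that in simp)
  have L: "(1/2) * ((if a > 0 then a * (M / a powr s) powr \<rho> else 0)
      + (if b > 0 then b * (M / b powr s) powr \<rho> else 0)) = M powr (1 + \<rho>)"
    unfolding letter[OF a] letter[OF b] using M by (simp add: M_def powr_add algebra_simps)
  have "(a / c) powr s + (1 - a / c) powr s = (2 * M) / c powr s"
  proof -
    have "1 - a / c = b / c" unfolding c_def using c c_def by (simp add: field_simps)
    then show ?thesis unfolding M_def by (simp add: powr_divide add_divide_distrib)
  qed
  then have "((a / c) powr s + (1 - a / c) powr s) powr (1 + \<rho>)
      = (2 * M) powr (1 + \<rho>) / c powr (s * (1 + \<rho>))"
    by (simp add: powr_divide powr_powr)
  also have "s * (1 + \<rho>) = 1" using rs1 by (simp add: algebra_simps)
  finally have "F_bin \<rho> (a / c) = 2 powr (-\<rho>) * 2 powr (1 + \<rho>) * M powr (1 + \<rho>) / c"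
    unfolding F_bin_def s_def[symmetric] using c by (simp add: powr_mult)
  also have "2 powr (-\<rho>) * 2 powr (1 + \<rho>) = 2" by (simp add: powr_add[symmetric])
  finally have R: "F_term \<rho> a b = M powr (1 + \<rho>)"
    unfolding F_term_def c_def[symmetric] using c by simp
  show ?thesis using L R unfolding M_def by simp
qed

lemma sum_UNIV_bool: "(\<Sum>x\<in>(UNIV :: bool set). f x) = f False + f True"
  by (simp add: UNIV_bool)

lemma capacity_decomp:
  assumes Y: "finite Y" and nn: "\<forall>x. \<forall>y\<in>Y. 0 \<le> W x y"
  shows "capacity Y W = (\<Sum>y\<in>Y. cap_term (W False y) (W True y))"
proof -
  define g where
    "g = (\<lambda>x y. if W x y > 0 then W x y * log 2 (W x y / (W False y / 2 + W True y / 2)) else 0)"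
  have "out_prob W y = W False y / 2 + W True y / 2" for y
    unfolding out_prob_def sum_UNIV_bool ..
  then have "(\<Sum>y\<in>{y\<in>Y. W x y > 0}. W x y * log 2 (W x y / out_prob W y)) = (\<Sum>y\<in>Y. g x y)" for x
    unfolding g_def by (simp add: sum.inter_filter[OF Y])
  then have "capacity Y W = (1/2) * (\<Sum>y\<in>Y. g False y) + (1/2) * (\<Sum>y\<in>Y. g True y)"
    unfolding capacity_def sum_UNIV_bool by simp
  also have "\<dots> = (\<Sum>y\<in>Y. (1/2) * (g False y + g True y))"
    by (simp add: sum_distrib_left sum.distrib distrib_left)
  also have "\<dots> = (\<Sum>y\<in>Y. cap_term (W False y) (W True y))"
    unfolding g_def using cap_term_eq nn by (intro sum.cong) auto
  finally show ?thesis .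
qed

lemma gallager_F_decomp:
  assumes Y: "finite Y" and nn: "\<forall>x. \<forall>y\<in>Y. 0 \<le> W x y" and r: "\<rho> > -1"
  shows "gallager_F \<rho> Y W = (\<Sum>y\<in>Y. F_term \<rho> (W False y) (W True y))"
proof -
  define s where "s = 1 / (1 + \<rho>)"
  define g where "g = (\<lambda>x y. if W x y > 0
      then W x y * (((1/2) * (W False y powr s + W True y powr s)) / W x y powr s) powr \<rho> else 0)"
  have "(\<Sum>y\<in>{y\<in>Y. W x y > 0}. W x y * (((1/2) * (\<Sum>x'\<in>UNIV. W x' y powr s)) / W x y powr s) powr \<rho>)
      = (\<Sum>y\<in>Y. g x y)" for x
    unfolding g_def sum_UNIV_bool by (simp only: sum.inter_filter[OF Y])
  then have "gallager_F \<rho> Y W = (1/2) * (\<Sum>y\<in>Y. g False y) + (1/2) * (\<Sum>y\<in>Y. g True y)"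
    unfolding gallager_F_def s_def[symmetric] sum_UNIV_bool by simp
  also have "\<dots> = (\<Sum>y\<in>Y. (1/2) * (g False y + g True y))"
    by (simp add: sum_distrib_left sum.distrib distrib_left)
  also have "\<dots> = (\<Sum>y\<in>Y. F_term \<rho> (W False y) (W True y))"
    unfolding g_def s_def using F_term_eq nn r by (intro sum.cong) auto
  finally show ?thesis .
qed

section \<open>Statement (i): the BEC and BSC bounds hold for every channel\<close>

lemma channel_bounds:
  assumes Y: "finite Y" and nn: "\<forall>x. \<forall>y\<in>Y. 0 \<le> W x y" and rows: "\<forall>x. (\<Sum>y\<in>Y. W x y) = 1"
    and r: "\<rho> > -1"
  shows "0 \<le> capacity Y W \<and> capacity Y W \<le> 1
    \<and> F_bec \<rho> (capacity Y W) \<le> gallager_F \<rho> Y W \<and> gallager_F \<rho> Y W \<le> F_bsc \<rho> (capacity Y W)"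
proof -
  define w where "w = (\<lambda>y. (W False y + W True y) / 2)"
  define pp where "pp = (\<lambda>y. W False y / (W False y + W True y))"
  have w0: "\<forall>y\<in>Y. w y \<ge> 0" unfolding w_def using nn by auto
  have ws: "(\<Sum>y\<in>Y. w y) = 1" unfolding w_def using rows
    by (simp add: sum.distrib sum_divide_distrib[symmetric])
  have pp01: "\<forall>y\<in>Y. 0 \<le> pp y \<and> pp y \<le> 1"
  proof
    fix y assume "y \<in> Y"
    then have "W False y \<ge> 0" "W True y \<ge> 0" using nn by auto
    then show "0 \<le> pp y \<and> pp y \<le> 1" unfolding pp_def
      by (cases "W False y + W True y = 0") (auto simp: divide_le_eq_1)
  qed
  define H where "H = (\<Sum>y\<in>Y. w y * h (pp y))"
  have "capacity Y W = (\<Sum>y\<in>Y. w y * (1 - h (pp y)))"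
    unfolding capacity_decomp[OF Y nn] cap_term_def w_def pp_def ..
  then have CH: "capacity Y W = 1 - H" unfolding H_def using ws
    by (simp add: algebra_simps sum_subtractf)
  have F: "gallager_F \<rho> Y W = (\<Sum>y\<in>Y. w y * F_bin \<rho> (pp y))"
    unfolding gallager_F_decomp[OF Y nn r] F_term_def w_def pp_def ..
  have H0: "0 \<le> H" unfolding H_def using w0 pp01 h_range by (intro sum_nonneg) auto
  have "H \<le> (\<Sum>y\<in>Y. w y * 1)" unfolding H_def
    using w0 pp01 h_range by (intro sum_mono mult_left_mono) auto
  then have H1: "H \<le> 1" using ws by simp
  \<comment> \<open>Upper bound: Jensen at the crossover probability whose entropy is the average entropy.\<close>
  have "gallager_F \<rho> Y W \<le> F_bsc \<rho> (capacity Y W)"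
    unfolding F F_bsc_eq_F_bin CH
    using F_bin_jensen[OF Y r w0 ws pp01] h_inv[OF H0 H1] unfolding H_def by simp
  moreover
  \<comment> \<open>Lower bound: average the chord inequality.\<close>
  have "(\<Sum>y\<in>Y. w y * (1 + (2 powr (-\<rho>) - 1) * (1 - h (pp y)))) \<le> gallager_F \<rho> Y W"
    unfolding F using w0 pp01 F_bin_above_chord[OF r] by (intro sum_mono mult_left_mono) auto
  moreover have "(\<Sum>y\<in>Y. w y * (1 + (2 powr (-\<rho>) - 1) * (1 - h (pp y))))
      = (\<Sum>y\<in>Y. w y + (2 powr (-\<rho>) - 1) * (w y * (1 - h (pp y))))"
    by (rule sum.cong) (simp_all add: algebra_simps)
  then have "(\<Sum>y\<in>Y. w y * (1 + (2 powr (-\<rho>) - 1) * (1 - h (pp y))))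
      = (\<Sum>y\<in>Y. w y) + (2 powr (-\<rho>) - 1) * (\<Sum>y\<in>Y. w y * (1 - h (pp y)))"
    by (simp add: sum.distrib sum_distrib_left)
  then have "(\<Sum>y\<in>Y. w y * (1 + (2 powr (-\<rho>) - 1) * (1 - h (pp y)))) = F_bec \<rho> (capacity Y W)"
    unfolding F_bec_def ws \<open>capacity Y W = (\<Sum>y\<in>Y. w y * (1 - h (pp y)))\<close> .
  ultimately show ?thesis using CH H0 H1 by simp
qed

section \<open>Monotonicity and inverses of F_bec and F_bsc in the capacity\<close>

lemma F_bsc_strict_mono:
  assumes r: "\<rho> > -1" and c: "0 \<le> c1" "c1 < c2" "c2 \<le> 1"
  shows "(\<rho> > 0 \<longrightarrow> F_bsc \<rho> c2 < F_bsc \<rho> c1) \<and> (\<rho> < 0 \<longrightarrow> F_bsc \<rho> c1 < F_bsc \<rho> c2)"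
proof -
  have lt: "h_inv (1 - c2) < h_inv (1 - c1)" using h_inv_strict_mono c by simp
  have "0 \<le> h_inv (1 - c2)" "h_inv (1 - c1) \<le> 1/2" using h_inv c by auto
  then show ?thesis
    unfolding F_bsc_eq_F_bin using F_bin_strict_mono[OF _ _ lt] F_bin_strict_antimono[OF _ r _ lt] by auto
qed

lemma F_bsc_inj:
  assumes r: "\<rho> > -1" "\<rho> \<noteq> 0" and c: "c1 \<in> {0..1}" "c2 \<in> {0..1}" "F_bsc \<rho> c1 = F_bsc \<rho> c2"
  shows "c1 = c2"
  using F_bsc_strict_mono[OF r(1), of c1 c2] F_bsc_strict_mono[OF r(1), of c2 c1] r c
  by (cases c1 c2 rule: linorder_cases; cases "\<rho> > 0") auto

lemma C_bsc_eq:
  assumes r: "\<rho> > -1" "\<rho> \<noteq> 0" and c: "c \<in> {0..1}"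
  shows "C_bsc \<rho> (F_bsc \<rho> c) = c"
  unfolding C_bsc_def by (rule the_equality) (use c F_bsc_inj[OF r] in auto)

text \<open>F_bec is affine in C with slope 2^-rho - 1, so its inverse is explicit.\<close>
lemma C_bec_eq:
  assumes r: "\<rho> \<noteq> 0" and c: "(t - 1) / (2 powr (-\<rho>) - 1) \<in> {0..1}"
  shows "C_bec \<rho> t = (t - 1) / (2 powr (-\<rho>) - 1)"
proof -
  have d: "2 powr (-\<rho>) - 1 \<noteq> (0::real)" using r by simp
  show ?thesis
    unfolding C_bec_def by (rule the_equality) (use c d in \<open>auto simp: F_bec_def\<close>)
qed

lemma F_bin_range:
  assumes r: "\<rho> > -1" and p: "0 \<le> p" "p \<le> 1/2"
  shows "min 1 (2 powr (-\<rho>)) \<le> F_bin \<rho> p \<and> F_bin \<rho> p \<le> max 1 (2 powr (-\<rho>))"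
proof -
  have "F_bin \<rho> 0 \<le> F_bin \<rho> p \<and> F_bin \<rho> p \<le> F_bin \<rho> (1/2) \<or>
        F_bin \<rho> (1/2) \<le> F_bin \<rho> p \<and> F_bin \<rho> p \<le> F_bin \<rho> 0"
  proof (cases "p = 0 \<or> p = 1/2")
    case False
    then have "0 < p" "p < 1/2" using p by auto
    moreover have "F_bin 0 q = 1" if "0 \<le> q" "q \<le> 1" for q
      using that by (simp add: F_bin_def)
    ultimately show ?thesis
      using F_bin_strict_mono[of \<rho> 0 p] F_bin_strict_mono[of \<rho> p "1/2"]
        F_bin_strict_antimono[OF _ r, of 0 p] F_bin_strict_antimono[OF _ r, of p "1/2"]
      by (cases "\<rho> > 0"; cases "\<rho> < 0") auto
  qed (metis linear)
  then show ?thesis using F_bin_0[OF r] F_bin_half[OF r] by auto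
qed

lemma F_bsc_range:
  assumes r: "\<rho> > -1" and C: "0 \<le> C" "C \<le> 1"
  shows "min 1 (2 powr (-\<rho>)) \<le> F_bsc \<rho> C \<and> F_bsc \<rho> C \<le> max 1 (2 powr (-\<rho>))"
  unfolding F_bsc_eq_F_bin using F_bin_range[OF r] h_inv[of "1 - C"] C by simp

lemma F_bsc_surj:
  assumes r: "\<rho> > -1" and t: "min 1 (2 powr (-\<rho>)) \<le> t" "t \<le> max 1 (2 powr (-\<rho>))"
  shows "\<exists>c\<in>{0..1}. F_bsc \<rho> c = t"
proof -
  have cont: "continuous_on {0..1/2} (F_bin \<rho>)"
    by (rule continuous_on_subset[OF continuous_on_F_bin[OF r]]) auto
  have "\<exists>p\<in>{0..1/2}. F_bin \<rho> p = t"
  proof (cases "2 powr (-\<rho>) \<le> (1::real)")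
    case True
    then show ?thesis
      using t F_bin_0[OF r] F_bin_half[OF r] IVT'[of "F_bin \<rho>" 0 t "1/2"] cont by auto
  next
    case False
    then show ?thesis
      using t F_bin_0[OF r] F_bin_half[OF r] IVT2'[of "F_bin \<rho>" "1/2" t 0] cont by auto
  qed
  then obtain p where p: "0 \<le> p" "p \<le> 1/2" "F_bin \<rho> p = t" by auto
  then have "F_bsc \<rho> (1 - h p) = t" unfolding F_bsc_eq_F_bin using h_inv_h by simp
  then show ?thesis using h_range_half p by (intro bexI[of _ "1 - h p"]) auto
qed

lemma capacity_bounds_neg:
  assumes r: "-1 < \<rho>" "\<rho> < 0" and C: "C \<in> {0..1}" and F: "F_bec \<rho> C \<le> t" "t \<le> F_bsc \<rho> C"
  shows "C_bsc \<rho> t \<le> C \<and> C \<le> C_bec \<rho> t"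
proof -
  define d where "d = 2 powr (-\<rho>) - 1"
  have d: "d > 0" unfolding d_def using r by simp
  have "0 \<le> d * C" using d C by simp
  then have t1: "1 \<le> t" using F(1) unfolding F_bec_def d_def[symmetric] by linarith
  have "t \<le> max 1 (2 powr (-\<rho>))"
    using F(2) F_bsc_range[OF r(1)] C by force
  then have t2: "t \<le> 2 powr (-\<rho>)" using d unfolding d_def by simp
  obtain c where c: "c \<in> {0..1}" "F_bsc \<rho> c = t"
    using F_bsc_surj[OF r(1), of t] t1 t2 d unfolding d_def by auto
  have "c \<le> C"
    using F_bsc_strict_mono[OF r(1), of C c] r c C F(2) by (cases "C < c") auto
  moreover have "C_bsc \<rho> t = c" using C_bsc_eq[OF r(1) _ c(1)] c(2) r by simp
  moreover have "C_bec \<rho> t = (t - 1) / d"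
    unfolding d_def using t1 t2 d r by (intro C_bec_eq) (auto simp: d_def field_simps)
  moreover have "C \<le> (t - 1) / d"
    using F(1) d unfolding F_bec_def d_def[symmetric] by (simp add: field_simps)
  ultimately show ?thesis by simp
qed

lemma capacity_bounds_pos:
  assumes r: "\<rho> > 0" and C: "C \<in> {0..1}" and F: "F_bec \<rho> C \<le> t" "t \<le> F_bsc \<rho> C"
  shows "C_bec \<rho> t \<le> C \<and> C \<le> C_bsc \<rho> t"
proof -
  have r': "\<rho> > -1" using r by simp
  define d where "d = 2 powr (-\<rho>) - 1"
  have "2 powr (-\<rho>) < 2 powr (0::real)" by (rule powr_less_mono) (use r in auto)
  then have d: "d < 0" unfolding d_def by simp
  have "d * 1 \<le> d * C" using d C by (intro mult_left_mono_neg) auto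
  then have t1: "2 powr (-\<rho>) \<le> t" using F(1) unfolding F_bec_def d_def[symmetric] by (simp add: d_def)
  have "t \<le> max 1 (2 powr (-\<rho>))"
    using F(2) F_bsc_range[OF r'] C by force
  then have t2: "t \<le> 1" using d unfolding d_def by simp
  obtain c where c: "c \<in> {0..1}" "F_bsc \<rho> c = t"
    using F_bsc_surj[OF r', of t] t1 t2 d unfolding d_def by auto
  have "C \<le> c"
    using F_bsc_strict_mono[OF r', of c C] r c C F(2) by (cases "c < C") auto
  moreover have "C_bsc \<rho> t = c" using C_bsc_eq[OF r' _ c(1)] c(2) r by simp
  moreover have "C_bec \<rho> t = (t - 1) / d"
    unfolding d_def using t1 t2 d r by (intro C_bec_eq) (auto simp: d_def field_simps)
  moreover have "(t - 1) / d \<le> C"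
    using F(1) d unfolding F_bec_def d_def[symmetric] by (simp add: field_simps)
  ultimately show ?thesis by simp
qed

lemma bims_stochastic:
  assumes "bims Y W"
  shows "finite Y" "\<forall>x. \<forall>y\<in>Y. 0 \<le> W x y" "\<forall>x. (\<Sum>y\<in>Y. W x y) = 1"
  using assms unfolding bims_def by auto

lemma bims_bounds:
  assumes r: "\<rho> > -1" and b: "bims Y W"
  shows "(F_bec \<rho> (capacity Y W) \<le> gallager_F \<rho> Y W \<and> gallager_F \<rho> Y W \<le> F_bsc \<rho> (capacity Y W))
      \<and> (\<rho> < 0 \<longrightarrow> C_bsc \<rho> (gallager_F \<rho> Y W) \<le> capacity Y W \<and> capacity Y W \<le> C_bec \<rho> (gallager_F \<rho> Y W))
      \<and> (\<rho> > 0 \<longrightarrow> C_bec \<rho> (gallager_F \<rho> Y W) \<le> capacity Y W \<and> capacity Y W \<le> C_bsc \<rho> (gallager_F \<rho> Y W))"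
proof -
  have bounds: "capacity Y W \<in> {0..1}" "F_bec \<rho> (capacity Y W) \<le> gallager_F \<rho> Y W"
    "gallager_F \<rho> Y W \<le> F_bsc \<rho> (capacity Y W)"
    using channel_bounds[OF bims_stochastic[OF b] r] by auto
  show ?thesis
    using bounds capacity_bounds_neg[OF r _ bounds] capacity_bounds_pos[OF _ bounds] by blast
qed

section \<open>Channels attaining every admissible pair (C, F)\<close>

lemma cap_term_pair: "cap_term (l * q) (l * (1 - q)) = l / 2 * (1 - h q)"
proof (cases "l = 0")
  case False
  have "l * q + l * (1 - q) = l" by (simp add: algebra_simps)
  moreover have "l * q / l = q" using False by simp
  ultimately show ?thesis unfolding cap_term_def by simp
qed (simp add: cap_term_def)

lemma F_term_pair: "F_term \<rho> (l * q) (l * (1 - q)) = l / 2 * F_bin \<rho> q"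
proof (cases "l = 0")
  case False
  have "l * q + l * (1 - q) = l" by (simp add: algebra_simps)
  moreover have "l * q / l = q" using False by simp
  ultimately show ?thesis unfolding F_term_def by simp
qed (simp add: F_term_def)

lemma cap_term_swap:
  "cap_term (l * e) (l * (1 - e)) = l / 2 * (1 - h e)"
  "cap_term (l * (1 - e)) (l * e) = l / 2 * (1 - h e)"
  using cap_term_pair[of l e] cap_term_pair[of l "1 - e"] by (simp_all add: h_sym)

lemma F_term_swap:
  "F_term \<rho> (l * e) (l * (1 - e)) = l / 2 * F_bin \<rho> e"
  "F_term \<rho> (l * (1 - e)) (l * e) = l / 2 * F_bin \<rho> e"
  using F_term_pair[of \<rho> l e] F_term_pair[of \<rho> l "1 - e"] by (simp_all add: F_bin_sym)

lemma divide_double_self: "u \<noteq> 0 \<Longrightarrow> u / (u + u) = (1/2 :: real)"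
  by simp

lemma cap_term_simps: "cap_term u 0 = u / 2" "cap_term 0 u = u / 2" "cap_term u u = 0"
  unfolding cap_term_def by (auto simp: divide_double_self)

lemma F_term_simps:
  assumes "\<rho> > -1"
  shows "F_term \<rho> u 0 = u / 2 * 2 powr (-\<rho>)" "F_term \<rho> 0 u = u / 2 * 2 powr (-\<rho>)" "F_term \<rho> u u = u"
  unfolding F_term_def using F_bin_0[OF assms] F_bin_1[OF assms] F_bin_half[OF assms]
  by (auto simp: divide_double_self)

text \<open>The two kinds of blocks of Gallager's symmetry partition used below.\<close>
lemma swap_pair_block:
  assumes "y0 \<noteq> y1" "W False y0 = W True y1" "W True y0 = W False y1"
  shows "image_mset (W False) (mset_set {y0, y1}) = image_mset (W True) (mset_set {y0, y1})
     \<and> (\<forall>y\<in>{y0, y1}. \<forall>y'\<in>{y0, y1}. {#W False y, W True y#} = {#W False y', W True y'#})"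
  using assms by (auto simp: add_mset_commute)

lemma self_symmetric_block:
  assumes "W False y0 = W True y0"
  shows "image_mset (W False) (mset_set {y0}) = image_mset (W True) (mset_set {y0})
     \<and> (\<forall>y\<in>{y0}. \<forall>y'\<in>{y0}. {#W False y, W True y#} = {#W False y', W True y'#})"
  using assms by auto

lemma bec_channel:
  assumes C: "0 \<le> C" "C \<le> 1" and r: "\<rho> > -1"
  shows "bims bec_Y (bec_W (1 - C)) \<and> capacity bec_Y (bec_W (1 - C)) = C
          \<and> gallager_F \<rho> bec_Y (bec_W (1 - C)) = F_bec \<rho> C"
proof -
  let ?W = "bec_W (1 - C)"
  have fin: "finite bec_Y" unfolding bec_Y_def by simp
  have nn: "\<forall>x. \<forall>y\<in>bec_Y. 0 \<le> ?W x y" using C unfolding bec_Y_def bec_W_def by auto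
  have "partition_on bec_Y {{0, 1}, {2}}"
    unfolding bec_Y_def by (auto simp: partition_on_def disjoint_def)
  moreover have "\<forall>x. (\<Sum>y\<in>bec_Y. ?W x y) = 1" unfolding bec_Y_def bec_W_def by auto
  ultimately have "bims bec_Y ?W"
    unfolding bims_def using fin nn swap_pair_block[of 0 1 ?W] self_symmetric_block[of ?W 2]
    unfolding bec_W_def by auto
  moreover have "capacity bec_Y ?W = C"
    unfolding capacity_decomp[OF fin nn] unfolding bec_Y_def bec_W_def by (simp add: cap_term_simps)
  moreover have "gallager_F \<rho> bec_Y ?W = F_bec \<rho> C"
    unfolding gallager_F_decomp[OF fin nn r] unfolding bec_Y_def bec_W_def F_bec_def
    by (simp add: F_term_simps[OF r] algebra_simps)
  ultimately show ?thesis by simp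
qed

lemma bsc_channel:
  assumes C: "0 \<le> C" "C \<le> 1" and r: "\<rho> > -1"
  shows "bims bsc_Y (bsc_W (h_inv (1 - C))) \<and> capacity bsc_Y (bsc_W (h_inv (1 - C))) = C
          \<and> gallager_F \<rho> bsc_Y (bsc_W (h_inv (1 - C))) = F_bsc \<rho> C"
proof -
  define e where "e = h_inv (1 - C)"
  have e: "0 \<le> e" "e \<le> 1/2" "h e = 1 - C" unfolding e_def using h_inv[of "1 - C"] C by auto
  let ?W = "bsc_W e"
  have fin: "finite bsc_Y" unfolding bsc_Y_def by simp
  have nn: "\<forall>x. \<forall>y\<in>bsc_Y. 0 \<le> ?W x y" using e unfolding bsc_Y_def bsc_W_def by auto
  have "partition_on bsc_Y {{0, 1}}"
    unfolding bsc_Y_def by (auto simp: partition_on_def disjoint_def)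
  moreover have "\<forall>x. (\<Sum>y\<in>bsc_Y. ?W x y) = 1" unfolding bsc_Y_def bsc_W_def by auto
  ultimately have "bims bsc_Y ?W"
    unfolding bims_def using fin nn swap_pair_block[of 0 1 ?W] unfolding bsc_W_def by auto
  moreover have "capacity bsc_Y ?W = cap_term (1 * (1 - e)) (1 * e) + cap_term (1 * e) (1 * (1 - e))"
    unfolding capacity_decomp[OF fin nn] unfolding bsc_Y_def bsc_W_def by simp
  moreover have "gallager_F \<rho> bsc_Y ?W = F_term \<rho> (1 * (1 - e)) (1 * e) + F_term \<rho> (1 * e) (1 * (1 - e))"
    unfolding gallager_F_decomp[OF fin nn r] unfolding bsc_Y_def bsc_W_def by simp
  moreover have "F_bsc \<rho> C = F_bin \<rho> e" unfolding F_bsc_eq_F_bin e_def ..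
  ultimately show ?thesis
    unfolding cap_term_swap F_term_swap e(3) unfolding e_def by simp
qed

text \<open>
  Using the BSC with probability l and the BEC otherwise (on disjoint output letters) gives a
  symmetric channel of capacity C whose F is the convex combination of F_bsc(C) and F_bec(C).
\<close>
definition mix_W :: "real \<Rightarrow> real \<Rightarrow> real \<Rightarrow> bool \<Rightarrow> nat \<Rightarrow> real" where
  "mix_W l e C x y = (if y = 0 then (if x then l * e else l * (1 - e))
     else if y = 1 then (if x then l * (1 - e) else l * e)
     else if y = 2 then (if x then 0 else (1 - l) * C)
     else if y = 3 then (if x then (1 - l) * C else 0)
     else (1 - l) * (1 - C))"

lemma mixture_channel:
  assumes C: "0 \<le> C" "C \<le> 1" and r: "\<rho> > -1" and l: "0 \<le> l" "l \<le> 1"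
  defines "e \<equiv> h_inv (1 - C)"
  shows "bims {0,1,2,3,4} (mix_W l e C) \<and> capacity {0,1,2,3,4} (mix_W l e C) = C
          \<and> gallager_F \<rho> {0,1,2,3,4} (mix_W l e C) = l * F_bsc \<rho> C + (1 - l) * F_bec \<rho> C"
proof -
  have e: "0 \<le> e" "e \<le> 1/2" "h e = 1 - C" unfolding e_def using h_inv[of "1 - C"] C by auto
  let ?W = "mix_W l e C"
  let ?Y = "{0::nat,1,2,3,4}"
  have fin: "finite ?Y" by simp
  have nn: "\<forall>x. \<forall>y\<in>?Y. 0 \<le> ?W x y" using e C l unfolding mix_W_def by auto
  have "partition_on ?Y {{0, 1}, {2, 3}, {4}}"
    by (auto simp: partition_on_def disjoint_def)
  moreover have "\<forall>x. (\<Sum>y\<in>?Y. ?W x y) = 1" unfolding mix_W_def by (auto simp: algebra_simps)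
  ultimately have "bims ?Y ?W"
    unfolding bims_def using fin nn swap_pair_block[of 0 1 ?W] swap_pair_block[of 2 3 ?W]
      self_symmetric_block[of ?W 4]
    unfolding mix_W_def by auto
  moreover have "capacity ?Y ?W = cap_term (l * (1 - e)) (l * e) + cap_term (l * e) (l * (1 - e))
      + cap_term ((1 - l) * C) 0 + cap_term 0 ((1 - l) * C) + cap_term ((1 - l) * (1 - C)) ((1 - l) * (1 - C))"
    unfolding capacity_decomp[OF fin nn] unfolding mix_W_def by simp
  moreover have "gallager_F \<rho> ?Y ?W = F_term \<rho> (l * (1 - e)) (l * e) + F_term \<rho> (l * e) (l * (1 - e))
      + F_term \<rho> ((1 - l) * C) 0 + F_term \<rho> 0 ((1 - l) * C)
      + F_term \<rho> ((1 - l) * (1 - C)) ((1 - l) * (1 - C))"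
    unfolding gallager_F_decomp[OF fin nn r] unfolding mix_W_def by simp
  moreover have "F_bsc \<rho> C = F_bin \<rho> e" unfolding F_bsc_eq_F_bin e_def ..
  ultimately show ?thesis
    unfolding cap_term_swap cap_term_simps F_term_swap F_term_simps[OF r] e(3) F_bec_def
    by (simp add: algebra_simps)
qed

lemma admissible_pair_attained:
  assumes C: "0 \<le> C" "C \<le> 1" and r: "\<rho> > -1" and t: "F_bec \<rho> C \<le> t" "t \<le> F_bsc \<rho> C"
  shows "\<exists>(Y :: nat set) W. bims Y W \<and> capacity Y W = C \<and> gallager_F \<rho> Y W = t"
proof -
  define l where "l = (if F_bsc \<rho> C = F_bec \<rho> C then 0 else (t - F_bec \<rho> C) / (F_bsc \<rho> C - F_bec \<rho> C))"
  have "0 \<le> l" "l \<le> 1" unfolding l_def using t by (auto simp: divide_le_eq_1)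
  moreover have "l * F_bsc \<rho> C + (1 - l) * F_bec \<rho> C = t"
    unfolding l_def using t by (auto simp: field_simps)
  ultimately show ?thesis using mixture_channel[OF C r] by blast
qed

theorem theorem1:
  fixes \<rho> :: real
  assumes "\<rho> > -1"
  shows
   "(\<forall>(Y :: 'y set) W. bims Y W \<longrightarrow>
        (F_bec \<rho> (capacity Y W) \<le> gallager_F \<rho> Y W \<and> gallager_F \<rho> Y W \<le> F_bsc \<rho> (capacity Y W))
      \<and> (\<rho> < 0 \<longrightarrow> C_bsc \<rho> (gallager_F \<rho> Y W) \<le> capacity Y W \<and> capacity Y W \<le> C_bec \<rho> (gallager_F \<rho> Y W))
      \<and> (\<rho> > 0 \<longrightarrow> C_bec \<rho> (gallager_F \<rho> Y W) \<le> capacity Y W \<and> capacity Y W \<le> C_bsc \<rho> (gallager_F \<rho> Y W)))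
    \<and> (\<forall>C \<in> {0..1}.
        bims bec_Y (bec_W (1 - C)) \<and> capacity bec_Y (bec_W (1 - C)) = C
          \<and> gallager_F \<rho> bec_Y (bec_W (1 - C)) = F_bec \<rho> C
      \<and> bims bsc_Y (bsc_W (h_inv (1 - C))) \<and> capacity bsc_Y (bsc_W (h_inv (1 - C))) = C
          \<and> gallager_F \<rho> bsc_Y (bsc_W (h_inv (1 - C))) = F_bsc \<rho> C)
    \<and> (\<forall>C t. C \<in> {0..1} \<longrightarrow>
        ((F_bec \<rho> C \<le> t \<and> t \<le> F_bsc \<rho> C) \<longleftrightarrow>
         (\<exists>(Y :: nat set) W. bims Y W \<and> capacity Y W = C \<and> gallager_F \<rho> Y W = t)))"
proof (intro conjI allI impI ballI)
  fix Y :: "'y set" and W assume "bims Y W"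
  note bounds = bims_bounds[OF assms this]
  show "F_bec \<rho> (capacity Y W) \<le> gallager_F \<rho> Y W" "gallager_F \<rho> Y W \<le> F_bsc \<rho> (capacity Y W)"
    "\<rho> < 0 \<Longrightarrow> C_bsc \<rho> (gallager_F \<rho> Y W) \<le> capacity Y W"
    "\<rho> < 0 \<Longrightarrow> capacity Y W \<le> C_bec \<rho> (gallager_F \<rho> Y W)"
    "\<rho> > 0 \<Longrightarrow> C_bec \<rho> (gallager_F \<rho> Y W) \<le> capacity Y W"
    "\<rho> > 0 \<Longrightarrow> capacity Y W \<le> C_bsc \<rho> (gallager_F \<rho> Y W)"
    using bounds by blast+
next
  fix C :: real assume "C \<in> {0..1}"
  then show "bims bec_Y (bec_W (1 - C))" "capacity bec_Y (bec_W (1 - C)) = C"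
    "gallager_F \<rho> bec_Y (bec_W (1 - C)) = F_bec \<rho> C"
    "bims bsc_Y (bsc_W (h_inv (1 - C)))" "capacity bsc_Y (bsc_W (h_inv (1 - C))) = C"
    "gallager_F \<rho> bsc_Y (bsc_W (h_inv (1 - C))) = F_bsc \<rho> C"
    using bec_channel[OF _ _ assms, of C] bsc_channel[OF _ _ assms, of C] by auto
next
  fix C t :: real assume C: "C \<in> {0..1}"
  show "(F_bec \<rho> C \<le> t \<and> t \<le> F_bsc \<rho> C) \<longleftrightarrow>
         (\<exists>(Y :: nat set) W. bims Y W \<and> capacity Y W = C \<and> gallager_F \<rho> Y W = t)"
    using admissible_pair_attained[OF _ _ assms, of C t] bims_bounds[OF assms] C by auto
qed

end
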